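(* Let $q=2^r$ ($r$ a positive integer), $N=q(q^2-1)$, and let $\{C_i\}_{i=0}^N$ be the weight distribution of the code $C(SL(2,q))$. Then for $0\le i\le N$, \[ C_i=\sum\binom{q^2}{\nu_0}\prod_{tr(\beta^{-1})=0}\binom{q^2+q}{\nu_\beta}\prod_{tr(\beta^{-1})=1}\binom{q^2-q}{\nu_\beta}, \] where the sum runs over all families of nonnegative integers $\{\nu_\beta\}_{\beta\in\mathbb{F}_q}$ with $\sum_\beta\nu_\beta=i$ and $\sum_\beta\nu_\beta\beta=0$ in $\mathbb{F}_q$, and the first and second products run over $\beta\in\mathbb{F}_q^*$ with $tr(\beta^{-1})=0$, respectively $tr(\beta^{-1})=1$.
   Context: $tr:\mathbb{F}_q\to\mathbb{F}_2$ is the absolute trace. $Tr$ is the matrix trace; for a fixed ordering $g_1,\dots,g_N$ of $SL(2,q)$ and $v=(Tr(g_1),\dots,Tr(g_N))\in\mathbb{F}_q^N$, $C(SL(2,q))=\{u\in\mathbb{F}_2^N:u\cdot v=0\}$ (dot product in $\mathbb{F}_q$). $C_i$ is the number of codewords of Hamming weight $i$. Convention: $\binom{b}{a}=0$ if $b<a$. *)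

theory Defs
  imports "HOL-Analysis.Analysis"
begin

text \<open>Absolute trace F_q -> F_2 for q = 2^r, with values in the prime subfield {0,1} of F_q.\<close>
definition abs_tr :: "nat \<Rightarrow> 'a::field \<Rightarrow> 'a" where
  "abs_tr r x = (\<Sum>j<r. x ^ (2 ^ j))"

definition SL2 :: "('a::field ^ 2 ^ 2) set" where
  "SL2 = {A. det A = 1}"

text \<open>The binary code C(SL(2,q)) w.r.t. an ordering g of SL(2,q) (indices 0..N-1);
  codewords are 0/1-vectors u (zero outside the index range), and u \<cdot> v is computed in F_q.\<close>
definition code_SL2 :: "nat \<Rightarrow> (nat \<Rightarrow> 'a::field ^ 2 ^ 2) \<Rightarrow> (nat \<Rightarrow> nat) set" where
  "code_SL2 N g = {u. (\<forall>i<N. u i \<in> {0, 1}) \<and> (\<forall>i\<ge>N. u i = 0) \<and>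
                      (\<Sum>i<N. of_nat (u i) * trace (g i)) = 0}"

definition hweight :: "nat \<Rightarrow> (nat \<Rightarrow> nat) \<Rightarrow> nat" where
  "hweight N u = card {i. i < N \<and> u i \<noteq> 0}"

end

theory Submission
  imports Defs "HOL-Computational_Algebra.Polynomial"
begin

text \<open>A codeword of weight \<open>i\<close> is a set of \<open>i\<close> matrices of \<open>SL(2,q)\<close> whose traces add up
  to \<open>0\<close>. Sorting such sets by how many of their elements have trace \<open>\<beta>\<close>, for each \<open>\<beta>\<close>,
  gives the sum over \<open>\<nu>\<close>; the sets with a prescribed profile \<open>\<nu>\<close> are counted by a product of
  binomial coefficients in the sizes of the trace classes. A matrix of trace \<open>\<beta>\<close> is given by
  entries \<open>a, b, c\<close> with \<open>a(\<beta> - a) - bc = 1\<close>, so the class of \<open>\<beta>\<close> has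
  \<open>q\<^sup>2 - q + q \<cdot> #{a. a(\<beta> - a) = 1}\<close> elements. In characteristic two, substituting
  \<open>a = \<beta>y\<close> turns \<open>a(\<beta> - a) = 1\<close> into the Artin-Schreier equation
  \<open>y\<^sup>2 + y = \<beta>\<^sup>-\<^sup>2\<close>, which has two solutions if \<open>tr(\<beta>\<^sup>-\<^sup>1) = 0\<close> and none otherwise.\<close>

section \<open>Characteristic two and the absolute trace\<close>

lemma of_nat_card_UNIV_eq_0: "of_nat CARD('a) = (0::'a::{ring_1,finite})"
proof -
  have "(\<Sum>x\<in>UNIV. x + 1) = (\<Sum>x\<in>UNIV. x :: 'a)"
    by (rule sum.reindex_bij_witness[of _ "\<lambda>x. x - 1" "\<lambda>x. x + 1"]) auto
  thus ?thesis by (simp add: sum.distrib)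
qed

lemma two_eq_0_if_card_UNIV_eq_power_of_two:
  assumes "CARD('a::{idom,finite}) = 2 ^ r"
  shows "(2::'a) = 0"
proof -
  have "(2::'a) ^ r = 0"
    using of_nat_card_UNIV_eq_0[where 'a='a] assms by simp
  thus ?thesis by simp
qed

lemma power_card_UNIV_eq_self: "x ^ CARD('a) = (x::'a::{field,finite})"
proof (cases "x = 0")
  case False
  have "x ^ card (UNIV - {0::'a}) * (\<Prod>y\<in>UNIV - {0}. y) = (\<Prod>y\<in>UNIV - {0}. x * y)"
    by (simp add: prod.distrib)
  also have "\<dots> = (\<Prod>y\<in>UNIV - {0}. y)"
    by (rule prod.reindex_bij_witness[of _ "\<lambda>y. y / x" "\<lambda>y. x * y"]) (use False in auto)
  finally have "x ^ (CARD('a) - 1) = 1"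
    by (simp add: card_Diff_subset)
  moreover have "CARD('a) = Suc (CARD('a) - 1)"
    using finite_UNIV_card_ge_0[where 'a='a] by simp
  ultimately show ?thesis
    by (metis power_Suc mult.right_neutral)
qed (simp add: power_0_left)

lemma power2_add_char2:
  assumes "(2::'a::comm_ring_1) = 0"
  shows "(x + y :: 'a) ^ 2 = x ^ 2 + y ^ 2"
proof -
  have "(x + y) ^ 2 = x ^ 2 + y ^ 2 + 2 * x * y"
    by (simp add: power2_eq_square algebra_simps)
  with assms show ?thesis by simp
qed

lemma power_two_power_add_char2:
  assumes "(2::'a::comm_ring_1) = 0"
  shows "(x + y :: 'a) ^ 2 ^ j = x ^ 2 ^ j + y ^ 2 ^ j"
proof (induction j)
  case (Suc j)
  have "(x + y) ^ 2 ^ Suc j = ((x + y) ^ 2 ^ j) ^ 2"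
    by (simp add: power_mult[symmetric] mult.commute)
  also have "\<dots> = x ^ 2 ^ Suc j + y ^ 2 ^ Suc j"
    by (simp add: Suc power2_add_char2[OF assms] power_mult[symmetric] mult.commute)
  finally show ?case .
qed simp

lemma power2_sum_char2:
  assumes "(2::'a::comm_ring_1) = 0" and "finite A"
  shows "(\<Sum>j\<in>A. f j :: 'a) ^ 2 = (\<Sum>j\<in>A. f j ^ 2)"
  using assms(2) by (induction A rule: finite_induct) (simp_all add: power2_add_char2[OF assms(1)])

lemma abs_tr_add:
  assumes "(2::'a::field) = 0"
  shows "abs_tr r (x + y :: 'a) = abs_tr r x + abs_tr r y"
  unfolding abs_tr_def by (simp add: power_two_power_add_char2[OF assms] sum.distrib)

lemma abs_tr_power2:
  assumes "(2::'a::field) = 0"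
  shows "abs_tr r (x ^ 2 :: 'a) = abs_tr r x ^ 2"
  unfolding abs_tr_def power2_sum_char2[OF assms finite_lessThan]
  by (simp add: power_mult[symmetric] mult.commute)

lemma abs_tr_power2_eq_self:
  assumes "CARD('a::{field,finite}) = 2 ^ r"
  shows "abs_tr r (x::'a) ^ 2 = abs_tr r x"
proof -
  let ?f = "\<lambda>j. x ^ 2 ^ j"
  have "abs_tr r x ^ 2 = (\<Sum>j<r. ?f (Suc j))"
    unfolding abs_tr_def power2_sum_char2[OF two_eq_0_if_card_UNIV_eq_power_of_two[OF assms] finite_lessThan]
    by (simp add: power_mult[symmetric] mult.commute)
  also have "\<dots> = (\<Sum>j<Suc r. ?f j) - ?f 0"
    by (subst sum.lessThan_Suc_shift) simp
  also have "\<dots> = (\<Sum>j<r. ?f j) + ?f r - ?f 0"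
    by (subst sum.lessThan_Suc) (rule refl)
  also have "?f r = x"
    using power_card_UNIV_eq_self[of x] assms by simp
  finally show ?thesis by (simp add: abs_tr_def)
qed

lemma abs_tr_eq_0_or_1:
  assumes "CARD('a::{field,finite}) = 2 ^ r"
  shows "abs_tr r (x::'a) = 0 \<or> abs_tr r x = 1"
proof -
  have "abs_tr r x * (abs_tr r x - 1) = 0"
    using abs_tr_power2_eq_self[OF assms, of x] by (simp add: power2_eq_square algebra_simps)
  thus ?thesis by simp
qed

lemma abs_tr_power2_add_self:
  assumes "CARD('a::{field,finite}) = 2 ^ r"
  shows "abs_tr r ((y::'a) ^ 2 + y) = 0"
proof -
  have char2: "(2::'a) = 0"
    by (rule two_eq_0_if_card_UNIV_eq_power_of_two[OF assms])
  have "abs_tr r (y ^ 2 + y) = 2 * abs_tr r y"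
    using abs_tr_add[OF char2] abs_tr_power2[OF char2] abs_tr_power2_eq_self[OF assms] by simp
  with char2 show ?thesis by simp
qed

text \<open>The trace is a nonzero polynomial of degree \<open>2 ^ (r - 1)\<close>.\<close>

lemma card_abs_tr_eq_0_le:
  assumes "r > 0"
  shows "card {x::'a::field. abs_tr r x = 0} \<le> 2 ^ (r - 1)"
proof -
  define p :: "'a poly" where "p = (\<Sum>j<r. monom 1 (2 ^ j))"
  have "coeff p (2 ^ (r - 1)) = 1"
    using assms by (simp add: p_def coeff_sum)
  hence "p \<noteq> 0" by auto
  have "degree p \<le> 2 ^ (r - 1)"
    unfolding p_def by (intro degree_sum_le order.trans[OF degree_monom_le]) auto
  moreover have "poly p x = abs_tr r x" for x
    by (simp add: p_def poly_sum poly_monom abs_tr_def)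
  ultimately show ?thesis
    using card_poly_roots_bound[OF \<open>p \<noteq> 0\<close>] by simp
qed

section \<open>The Artin-Schreier equation\<close>

lemma power2_add_self_eq_iff_char2:
  fixes y y0 c :: "'a::idom"
  assumes "(2::'a) = 0" and "y0 ^ 2 + y0 = c"
  shows "y ^ 2 + y = c \<longleftrightarrow> y = y0 \<or> y = y0 + 1"
proof -
  have "y ^ 2 + y - c = (y - y0) * (y - (y0 + 1)) - 2 * (y0 ^ 2 + y0 - y * y0 - y)"
    unfolding assms(2)[symmetric] by (simp add: power2_eq_square algebra_simps)
  hence "y ^ 2 + y - c = (y - y0) * (y - (y0 + 1))"
    using assms(1) by simp
  thus ?thesis by (metis eq_iff_diff_eq_0 mult_eq_0_iff)
qed

lemma card_power2_add_self_eq_in_range: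
  assumes "(2::'a::idom) = 0" and "c \<in> range (\<lambda>y::'a. y ^ 2 + y)"
  shows "card {y. y ^ 2 + y = c} = 2"
proof -
  obtain y0 where "y0 ^ 2 + y0 = c" using assms(2) by auto
  hence "{y. y ^ 2 + y = c} = {y0, y0 + 1}"
    using power2_add_self_eq_iff_char2[OF assms(1)] by blast
  thus ?thesis by simp
qed

text \<open>Additive Hilbert 90. The map \<open>y \<mapsto> y\<^sup>2 + y\<close> is two-to-one into the kernel of the trace,
  so its image has \<open>2 ^ (r - 1)\<close> elements, which is at least the size of that kernel.\<close>

lemma range_power2_add_self:
  assumes "CARD('a::{field,finite}) = 2 ^ r" and "r > 0"
  shows "range (\<lambda>y::'a. y ^ 2 + y) = {c. abs_tr r c = 0}"
proof (rule card_seteq)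
  let ?f = "\<lambda>y::'a. y ^ 2 + y"
  have char2: "(2::'a) = 0"
    by (rule two_eq_0_if_card_UNIV_eq_power_of_two[OF assms(1)])
  have "2 ^ r = (\<Sum>c\<in>range ?f. card {y. ?f y = c})"
    using sum.group[of UNIV "range ?f" ?f "\<lambda>_. 1::nat"] assms(1) by simp
  also have "\<dots> = 2 * card (range ?f)"
    using card_power2_add_self_eq_in_range[OF char2] by simp
  finally have "card (range ?f) = 2 ^ (r - 1)"
    using assms(2) by (cases r) auto
  thus "card {c::'a. abs_tr r c = 0} \<le> card (range ?f)"
    using card_abs_tr_eq_0_le[OF assms(2)] by simp
  show "range ?f \<subseteq> {c. abs_tr r c = 0}"
    using abs_tr_power2_add_self[OF assms(1)] by auto
qed simp

lemma card_power2_add_self_eq: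
  assumes "CARD('a::{field,finite}) = 2 ^ r" and "r > 0"
  shows "card {y::'a. y ^ 2 + y = c} = (if abs_tr r c = 0 then 2 else 0)"
  using card_power2_add_self_eq_in_range[OF two_eq_0_if_card_UNIV_eq_power_of_two[OF assms(1)]]
    range_power2_add_self[OF assms]
  by (auto simp flip: Collect_empty_eq)

section \<open>Trace classes of \<open>SL(2, q)\<close>\<close>

lemma diff_eq_add_char2:
  assumes "(2::'a::comm_ring_1) = 0"
  shows "x - y = (x + y :: 'a)"
proof -
  have "x - y = x + y - 2 * y" by (simp add: algebra_simps)
  with assms show ?thesis by simp
qed

lemma card_pairs_mult_eq:
  fixes m :: "'a::{field,finite}"
  shows "card {(b, c). b * c = m} = CARD('a) - 1 + (if m = 0 then CARD('a) else 0)"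
proof (cases "m = 0")
  case True
  have "{(b, c). b * c = m} = (UNIV - {0}) \<times> {0} \<union> {0} \<times> UNIV"
    using True by auto
  moreover have "card ((UNIV - {0::'a}) \<times> {0} \<union> {0} \<times> (UNIV::'a set)) =
      card ((UNIV - {0::'a}) \<times> {0::'a}) + card ({0::'a} \<times> (UNIV::'a set))"
    by (rule card_Un_disjoint) auto
  ultimately show ?thesis
    using True by (simp add: card_cartesian_product card_Diff_subset)
next
  case False
  have "bij_betw (\<lambda>b. (b, m / b)) (UNIV - {0}) {(b, c). b * c = m}"
    by (rule bij_betwI[where g=fst]) (use False in auto)
  hence "card {(b, c). b * c = m} = card (UNIV - {0::'a})"
    by (simp add: bij_betw_same_card)
  thus ?thesis
    using False by (simp add: card_Diff_subset)
qed

lemma card_SL2_trace_eq_card_triples: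
  "card {A::'a::field^2^2. A \<in> SL2 \<and> trace A = \<beta>} = card {(a, b, c). a * (\<beta> - a) - b * c = (1::'a)}"
proof (rule bij_betw_same_card)
  let ?entries = "\<lambda>A::'a^2^2. (A$1$1, A$1$2, A$2$1)"
  let ?matrix = "\<lambda>(a, b, c). (\<chi> i j. if i = 1 then (if j = 1 then a else b) else (if j = 1 then c else \<beta> - a)) :: 'a^2^2"
  have trace_2: "trace A = A$1$1 + A$2$2" for A :: "'a^2^2"
    by (simp add: trace_def sum_2)
  show "bij_betw ?entries {A. A \<in> SL2 \<and> trace A = \<beta>} {(a, b, c). a * (\<beta> - a) - b * c = 1}"
  proof (rule bij_betw_byWitness[where f'="?matrix"])
    show "\<forall>A\<in>{A. A \<in> SL2 \<and> trace A = \<beta>}. ?matrix (?entries A) = A"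
      by (auto simp: vec_eq_iff forall_2 trace_2)
    show "?entries ` {A. A \<in> SL2 \<and> trace A = \<beta>} \<subseteq> {(a, b, c). a * (\<beta> - a) - b * c = 1}"
      by (auto simp: SL2_def det_2 trace_2)
  qed (auto simp: SL2_def det_2 trace_2)
qed

lemma card_SL2_trace:
  fixes \<beta> :: "'a::{field,finite}"
  shows "card {A::'a^2^2. A \<in> SL2 \<and> trace A = \<beta>} =
    CARD('a) ^ 2 - CARD('a) + CARD('a) * card {a. a * (\<beta> - a) = 1}"
proof -
  let ?q = "CARD('a)"
  have "{(a, b, c). a * (\<beta> - a) - b * c = (1::'a)} = (SIGMA a:UNIV. {(b, c). b * c = a * (\<beta> - a) - 1})"
    by (auto simp: algebra_simps)
  hence "card {(a, b, c). a * (\<beta> - a) - b * c = (1::'a)} =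
      (\<Sum>a\<in>UNIV. ?q - 1 + (if a * (\<beta> - a) = 1 then ?q else 0))"
    by (simp add: card_pairs_mult_eq)
  also have "\<dots> = (\<Sum>a::'a\<in>UNIV. ?q - 1) + (\<Sum>a\<in>UNIV. if a * (\<beta> - a) = 1 then ?q else 0)"
    by (rule sum.distrib)
  also have "\<dots> = ?q * (?q - 1) + ?q * card {a. a * (\<beta> - a) = 1}"
    by (simp add: sum.If_cases mult.commute)
  finally show ?thesis
    by (simp add: card_SL2_trace_eq_card_triples power2_eq_square diff_mult_distrib2)
qed

lemma card_mult_diff_eq_1_char2:
  assumes "CARD('a::{field,finite}) = 2 ^ r" and "r > 0"
  shows "card {a::'a. a * (\<beta> - a) = 1} =
    (if \<beta> = 0 then 1 else if abs_tr r (inverse \<beta>) = 0 then 2 else 0)"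
proof -
  have char2: "(2::'a) = 0"
    by (rule two_eq_0_if_card_UNIV_eq_power_of_two[OF assms(1)])
  show ?thesis
  proof (cases "\<beta> = 0")
    case True
    have minus_one: "-1 = (1::'a)"
      using diff_eq_add_char2[OF char2, of 0 1] by simp
    have "a * (0 - a) = 1 \<longleftrightarrow> a * a = 1" for a :: 'a
      unfolding diff_eq_add_char2[OF char2] by simp
    also have "a * a = 1 \<longleftrightarrow> a = 1" for a :: 'a
      using square_eq_1_iff[of a] minus_one by simp
    finally have "{a. a * (0 - a) = 1} = {1::'a}"
      by auto
    thus ?thesis using True by simp
  next
    case False
    have expand: "a * (\<beta> - a) = \<beta> ^ 2 * ((a / \<beta>) ^ 2 + a / \<beta>)" for a
      using False by (simp add: diff_eq_add_char2[OF char2] field_simps power2_eq_square)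
    have scale: "\<beta> ^ 2 * y = 1 \<longleftrightarrow> y = inverse \<beta> ^ 2" for y
      using False by (metis inverse_unique power_inverse right_inverse power_not_zero)
    have iff: "a * (\<beta> - a) = 1 \<longleftrightarrow> (a / \<beta>) ^ 2 + a / \<beta> = inverse \<beta> ^ 2" for a
      unfolding expand scale ..
    have "(\<lambda>a. a / \<beta>) ` {a. a * (\<beta> - a) = 1} = {y. y ^ 2 + y = inverse \<beta> ^ 2}"
    proof
      show "(\<lambda>a. a / \<beta>) ` {a. a * (\<beta> - a) = 1} \<subseteq> {y. y ^ 2 + y = inverse \<beta> ^ 2}"
        using iff by auto
      show "{y. y ^ 2 + y = inverse \<beta> ^ 2} \<subseteq> (\<lambda>a. a / \<beta>) ` {a. a * (\<beta> - a) = 1}"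
      proof
        fix y assume "y \<in> {y. y ^ 2 + y = inverse \<beta> ^ 2}"
        thus "y \<in> (\<lambda>a. a / \<beta>) ` {a. a * (\<beta> - a) = 1}"
          using iff[of "\<beta> * y"] False by (intro image_eqI[where x="\<beta> * y"]) auto
      qed
    qed
    moreover have "inj_on (\<lambda>a. a / \<beta>) {a. a * (\<beta> - a) = 1}"
      using False by (auto intro: inj_onI)
    ultimately have "card {a. a * (\<beta> - a) = 1} = card {y. y ^ 2 + y = inverse \<beta> ^ 2}"
      by (metis card_image)
    also have "\<dots> = (if abs_tr r (inverse \<beta>) = 0 then 2 else 0)"
      by (simp add: card_power2_add_self_eq[OF assms] abs_tr_power2[OF char2]
          abs_tr_power2_eq_self[OF assms(1)])
    finally show ?thesis using False by simp
  qed
qed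

lemma card_SL2_trace_char2:
  assumes "CARD('a::{field,finite}) = 2 ^ r" and "r > 0"
  shows "card {A::'a^2^2. A \<in> SL2 \<and> trace A = \<beta>} =
    (if \<beta> = 0 then CARD('a) ^ 2
     else if abs_tr r (inverse \<beta>) = 0 then CARD('a) ^ 2 + CARD('a)
     else CARD('a) ^ 2 - CARD('a))"
proof -
  have "CARD('a) \<le> CARD('a) ^ 2"
    by (simp add: power2_eq_square)
  thus ?thesis
    by (simp add: card_SL2_trace card_mult_diff_eq_1_char2[OF assms])
qed

lemma prod_UNIV_split_abs_tr:
  assumes "CARD('a::{field,finite}) = 2 ^ r"
  shows "(\<Prod>\<beta>\<in>UNIV. f \<beta>) =
    f 0 * (\<Prod>\<beta>\<in>{\<beta>::'a. \<beta> \<noteq> 0 \<and> abs_tr r (inverse \<beta>) = 0}. f \<beta>)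
        * (\<Prod>\<beta>\<in>{\<beta>. \<beta> \<noteq> 0 \<and> abs_tr r (inverse \<beta>) = 1}. f \<beta>)"
proof -
  let ?Z0 = "{\<beta>::'a. \<beta> \<noteq> 0 \<and> abs_tr r (inverse \<beta>) = 0}"
  let ?Z1 = "{\<beta>::'a. \<beta> \<noteq> 0 \<and> abs_tr r (inverse \<beta>) = 1}"
  have "(UNIV::'a set) = insert 0 (?Z0 \<union> ?Z1)"
    using abs_tr_eq_0_or_1[OF assms] by auto
  hence "(\<Prod>\<beta>\<in>UNIV. f \<beta>) = prod f (insert 0 (?Z0 \<union> ?Z1))"
    by (rule arg_cong)
  also have "\<dots> = f 0 * prod f (?Z0 \<union> ?Z1)"
    by (rule prod.insert) auto
  also have "prod f (?Z0 \<union> ?Z1) = prod f ?Z0 * prod f ?Z1"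
    by (rule prod.union_disjoint) auto
  finally show ?thesis by (simp add: mult.assoc)
qed

lemma prod_choose_SL2_trace_classes:
  assumes "CARD('a::{field,finite}) = 2 ^ r" and "r > 0"
    and "\<And>\<beta>. c \<beta> = card {A::'a^2^2. A \<in> SL2 \<and> trace A = \<beta>}"
  shows "(\<Prod>\<beta>\<in>UNIV. c \<beta> choose \<nu> \<beta>) =
    (CARD('a) ^ 2 choose \<nu> 0)
    * (\<Prod>\<beta>\<in>{\<beta>. \<beta> \<noteq> 0 \<and> abs_tr r (inverse \<beta>) = 0}. (CARD('a) ^ 2 + CARD('a)) choose \<nu> \<beta>)
    * (\<Prod>\<beta>\<in>{\<beta>. \<beta> \<noteq> 0 \<and> abs_tr r (inverse \<beta>) = 1}. (CARD('a) ^ 2 - CARD('a)) choose \<nu> \<beta>)"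
proof -
  note count = assms(3) card_SL2_trace_char2[OF assms(1,2)]
  have "c 0 choose \<nu> 0 = CARD('a) ^ 2 choose \<nu> 0"
    by (simp only: count simp_thms if_True)
  moreover have "c \<beta> choose \<nu> \<beta> = (CARD('a) ^ 2 + CARD('a)) choose \<nu> \<beta>"
    if "\<beta> \<in> {\<beta>. \<beta> \<noteq> 0 \<and> abs_tr r (inverse \<beta>) = 0}" for \<beta>
    using that by (simp only: count mem_Collect_eq simp_thms if_False if_True)
  moreover have "c \<beta> choose \<nu> \<beta> = (CARD('a) ^ 2 - CARD('a)) choose \<nu> \<beta>"
    if "\<beta> \<in> {\<beta>. \<beta> \<noteq> 0 \<and> abs_tr r (inverse \<beta>) = 1}" for \<beta>
    using that by (simp only: count mem_Collect_eq if_False zero_neq_one[symmetric])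
  ultimately show ?thesis
    unfolding prod_UNIV_split_abs_tr[OF assms(1)]
    by (intro arg_cong2[where f="(*)"] prod.cong refl) blast+
qed

section \<open>Codewords as zero-sum subsets\<close>

lemma card_code_SL2_weight:
  "card {u \<in> code_SL2 N g. hweight N u = i} =
    card {S. S \<subseteq> {..<N} \<and> card S = i \<and> (\<Sum>k\<in>S. trace (g k)) = 0}"
proof (rule sym, rule bij_betw_same_card)
  let ?support = "\<lambda>u::nat \<Rightarrow> nat. {k. k < N \<and> u k \<noteq> 0}"
  have sum_indicator: "(\<Sum>k<N. of_nat (indicator S k) * trace (g k)) = (\<Sum>k\<in>S. trace (g k))"
    if "S \<subseteq> {..<N}" for S
  proof -
    have "(\<Sum>k<N. of_nat (indicator S k) * trace (g k)) = (\<Sum>k\<in>{..<N} \<inter> S. trace (g k))"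
      by (simp add: sum.If_cases indicator_def)
    with that show ?thesis
      by (simp add: Int_absorb1)
  qed
  have support_indicator: "?support (indicator S) = S" if "S \<subseteq> {..<N}" for S
    using that by (auto simp: indicator_def)
  have indicator_support: "indicator (?support u) = u" if "u \<in> code_SL2 N g" for u
    using that by (fastforce simp: code_SL2_def indicator_def not_less)
  show "bij_betw indicator {S. S \<subseteq> {..<N} \<and> card S = i \<and> (\<Sum>k\<in>S. trace (g k)) = 0}
      {u \<in> code_SL2 N g. hweight N u = i}"
  proof (rule bij_betw_byWitness[where f'="?support"])
    show "indicator ` {S. S \<subseteq> {..<N} \<and> card S = i \<and> (\<Sum>k\<in>S. trace (g k)) = 0}
        \<subseteq> {u \<in> code_SL2 N g. hweight N u = i}"
    proof (rule image_subsetI)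
      fix S assume "S \<in> {S. S \<subseteq> {..<N} \<and> card S = i \<and> (\<Sum>k\<in>S. trace (g k)) = 0}"
      hence S: "S \<subseteq> {..<N}" "card S = i" "(\<Sum>k\<in>S. trace (g k)) = 0"
        by simp_all
      have "indicator S k = (0::nat)" if "k \<ge> N" for k
        using S(1) that by (auto simp: indicator_def)
      hence "indicator S \<in> code_SL2 N g"
        using S sum_indicator[OF S(1)] by (simp add: code_SL2_def indicator_def)
      moreover have "hweight N (indicator S) = i"
        using support_indicator[OF S(1)] S(2) by (simp add: hweight_def)
      ultimately show "indicator S \<in> {u \<in> code_SL2 N g. hweight N u = i}"
        by simp
    qed
    show "?support ` {u \<in> code_SL2 N g. hweight N u = i}
        \<subseteq> {S. S \<subseteq> {..<N} \<and> card S = i \<and> (\<Sum>k\<in>S. trace (g k)) = 0}"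
    proof (rule image_subsetI)
      fix u assume "u \<in> {u \<in> code_SL2 N g. hweight N u = i}"
      hence u: "u \<in> code_SL2 N g" "hweight N u = i"
        by simp_all
      have "(\<Sum>k\<in>?support u. trace (g k)) = (\<Sum>k<N. of_nat (indicator (?support u) k) * trace (g k))"
        by (rule sum_indicator[symmetric]) auto
      also have "\<dots> = 0"
        unfolding indicator_support[OF u(1)] using u(1) by (simp add: code_SL2_def)
      finally show "?support u \<in> {S. S \<subseteq> {..<N} \<and> card S = i \<and> (\<Sum>k\<in>S. trace (g k)) = 0}"
        using u(2) by (auto simp: hweight_def)
    qed
  qed (use support_indicator indicator_support in auto)
qed

definition value_profile :: "('c \<Rightarrow> 'a) \<Rightarrow> 'c set \<Rightarrow> 'a \<Rightarrow> nat" where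
  "value_profile t S \<beta> = card {k \<in> S. t k = \<beta>}"

lemma card_eq_sum_value_profile:
  fixes t :: "'c \<Rightarrow> 'a::finite"
  assumes "finite S"
  shows "card S = (\<Sum>\<beta>\<in>UNIV. value_profile t S \<beta>)"
  using sum.group[OF assms, of UNIV t "\<lambda>_. 1::nat"] by (simp add: value_profile_def)

lemma sum_eq_sum_value_profile:
  fixes t :: "'c \<Rightarrow> 'a::{semiring_1,finite}"
  assumes "finite S"
  shows "(\<Sum>k\<in>S. t k) = (\<Sum>\<beta>\<in>UNIV. of_nat (value_profile t S \<beta>) * \<beta>)"
  using sum_fun_comp[OF assms, of UNIV t id] by (simp add: value_profile_def)

lemma card_subsets_with_value_profile:
  fixes t :: "'c \<Rightarrow> 'a::finite"
  assumes "finite X"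
  shows "card {S. S \<subseteq> X \<and> value_profile t S = \<nu>} = (\<Prod>\<beta>\<in>UNIV. card {k \<in> X. t k = \<beta>} choose \<nu> \<beta>)"
proof -
  let ?parts = "\<Pi>\<^sub>E \<beta>\<in>UNIV. {A. A \<subseteq> {k \<in> X. t k = \<beta>} \<and> card A = \<nu> \<beta>}"
  have profile_iff: "value_profile t S = \<nu> \<longleftrightarrow> (\<forall>\<beta>. card {k \<in> S. t k = \<beta>} = \<nu> \<beta>)" for S
    by (auto simp: value_profile_def)
  have parts_iff: "h \<in> ?parts \<longleftrightarrow> (\<forall>\<beta>. h \<beta> \<subseteq> {k \<in> X. t k = \<beta>} \<and> card (h \<beta>) = \<nu> \<beta>)" for h
    by (simp add: PiE_UNIV_domain Pi_iff)
  have fibre_union: "{k \<in> (\<Union>\<beta>'. h \<beta>'). t k = \<beta>} = h \<beta>" if "\<forall>\<beta>. h \<beta> \<subseteq> {k \<in> X. t k = \<beta>}" for h \<beta>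
    using that by blast
  have "bij_betw (\<lambda>S \<beta>. {k \<in> S. t k = \<beta>}) {S. S \<subseteq> X \<and> value_profile t S = \<nu>} ?parts"
  proof (rule bij_betw_byWitness[where f'="\<lambda>h. \<Union>\<beta>. h \<beta>"])
    show "\<forall>S\<in>{S. S \<subseteq> X \<and> value_profile t S = \<nu>}. (\<Union>\<beta>. {k \<in> S. t k = \<beta>}) = S"
      by blast
    show "\<forall>h\<in>?parts. (\<lambda>\<beta>. {k \<in> (\<Union>\<beta>'. h \<beta>'). t k = \<beta>}) = h"
    proof
      fix h assume "h \<in> ?parts"
      hence "\<forall>\<beta>. h \<beta> \<subseteq> {k \<in> X. t k = \<beta>}"
        by (simp add: parts_iff)
      thus "(\<lambda>\<beta>. {k \<in> (\<Union>\<beta>'. h \<beta>'). t k = \<beta>}) = h"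
        by (intro ext fibre_union)
    qed
    show "(\<lambda>S \<beta>. {k \<in> S. t k = \<beta>}) ` {S. S \<subseteq> X \<and> value_profile t S = \<nu>} \<subseteq> ?parts"
    proof (rule image_subsetI)
      fix S assume "S \<in> {S. S \<subseteq> X \<and> value_profile t S = \<nu>}"
      thus "(\<lambda>\<beta>. {k \<in> S. t k = \<beta>}) \<in> ?parts"
        unfolding parts_iff by (auto simp: profile_iff)
    qed
    show "(\<lambda>h. \<Union>\<beta>. h \<beta>) ` ?parts \<subseteq> {S. S \<subseteq> X \<and> value_profile t S = \<nu>}"
    proof (rule image_subsetI)
      fix h assume "h \<in> ?parts"
      hence sub: "\<forall>\<beta>. h \<beta> \<subseteq> {k \<in> X. t k = \<beta>}" and card: "\<forall>\<beta>. card (h \<beta>) = \<nu> \<beta>"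
        by (simp_all add: parts_iff)
      have "(\<Union>\<beta>. h \<beta>) \<subseteq> X"
        using sub by blast
      moreover have "value_profile t (\<Union>\<beta>. h \<beta>) = \<nu>"
        unfolding profile_iff fibre_union[OF sub] using card .
      ultimately show "(\<Union>\<beta>. h \<beta>) \<in> {S. S \<subseteq> X \<and> value_profile t S = \<nu>}"
        by simp
    qed
  qed
  hence "card {S. S \<subseteq> X \<and> value_profile t S = \<nu>} = card ?parts"
    by (rule bij_betw_same_card)
  also have "\<dots> = (\<Prod>\<beta>\<in>UNIV. card {k \<in> X. t k = \<beta>} choose \<nu> \<beta>)"
    using assms by (simp add: card_PiE n_subsets)
  finally show ?thesis .
qed

lemma card_zero_sum_subsets:
  fixes t :: "'c \<Rightarrow> 'a::{semiring_1,finite}"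
  assumes "finite X"
  shows "card {S. S \<subseteq> X \<and> card S = i \<and> (\<Sum>k\<in>S. t k) = 0} =
    (\<Sum>\<nu>\<in>{\<nu>. (\<Sum>\<beta>\<in>UNIV. \<nu> \<beta>) = i \<and> (\<Sum>\<beta>\<in>UNIV. of_nat (\<nu> \<beta>) * \<beta>) = 0}.
       \<Prod>\<beta>\<in>UNIV. card {k \<in> X. t k = \<beta>} choose \<nu> \<beta>)"
proof -
  let ?V = "{\<nu>. (\<Sum>\<beta>\<in>UNIV. \<nu> \<beta>) = i \<and> (\<Sum>\<beta>\<in>UNIV. of_nat (\<nu> \<beta>) * \<beta>) = (0::'a)}"
  let ?F = "\<lambda>\<nu>. {S. S \<subseteq> X \<and> value_profile t S = \<nu>}"
  have "finite ?V"
  proof (rule finite_subset)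
    show "?V \<subseteq> (\<Pi>\<^sub>E \<beta>\<in>UNIV. {..i})"
    proof
      fix \<nu> assume "\<nu> \<in> ?V"
      hence "\<nu> \<beta> \<le> i" for \<beta>
        using member_le_sum[of \<beta> UNIV \<nu>] by simp
      thus "\<nu> \<in> (\<Pi>\<^sub>E \<beta>\<in>UNIV. {..i})"
        by (simp add: PiE_UNIV_domain)
    qed
  qed (simp add: finite_PiE)
  have "S \<in> {S. S \<subseteq> X \<and> card S = i \<and> (\<Sum>k\<in>S. t k) = 0} \<longleftrightarrow> S \<in> (\<Union>\<nu>\<in>?V. ?F \<nu>)" for S
  proof (cases "S \<subseteq> X")
    case True
    hence "finite S"
      using assms by (rule finite_subset)
    with True show ?thesis
      by (simp add: card_eq_sum_value_profile[of S t] sum_eq_sum_value_profile[of S t])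
  qed simp
  hence "{S. S \<subseteq> X \<and> card S = i \<and> (\<Sum>k\<in>S. t k) = 0} = (\<Union>\<nu>\<in>?V. ?F \<nu>)"
    by (rule set_eqI)
  also have "card (\<Union>\<nu>\<in>?V. ?F \<nu>) = (\<Sum>\<nu>\<in>?V. card (?F \<nu>))"
  proof (rule card_UN_disjoint)
    show "\<forall>\<nu>\<in>?V. finite (?F \<nu>)"
      using assms by (simp add: finite_subset[of _ "Pow X"] subset_eq)
  qed (use \<open>finite ?V\<close> in auto)
  finally show ?thesis
    using assms by (simp add: card_subsets_with_value_profile)
qed

theorem corollary18:
  fixes r :: nat and N :: nat and g :: "nat \<Rightarrow> 'a::{field,finite} ^ 2 ^ 2" and i :: nat
  assumes "r > 0"
    and "CARD('a) = 2 ^ r"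
    and "N = CARD('a) * (CARD('a) ^ 2 - 1)"
    and "bij_betw g {..<N} (SL2 :: ('a ^ 2 ^ 2) set)"
    and "i \<le> N"
  shows "card {u \<in> code_SL2 N g. hweight N u = i} =
    (\<Sum>\<nu> \<in> {\<nu> :: 'a \<Rightarrow> nat. (\<Sum>\<beta>\<in>UNIV. \<nu> \<beta>) = i \<and> (\<Sum>\<beta>\<in>UNIV. of_nat (\<nu> \<beta>) * \<beta>) = 0}.
       ((CARD('a) ^ 2) choose (\<nu> 0))
       * (\<Prod>\<beta> \<in> {\<beta>. \<beta> \<noteq> 0 \<and> abs_tr r (inverse \<beta>) = 0}. (CARD('a) ^ 2 + CARD('a)) choose (\<nu> \<beta>))
       * (\<Prod>\<beta> \<in> {\<beta>. \<beta> \<noteq> 0 \<and> abs_tr r (inverse \<beta>) = 1}. (CARD('a) ^ 2 - CARD('a)) choose (\<nu> \<beta>)))"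
proof -
  have "card {k \<in> {..<N}. trace (g k) = \<beta>} = card {A \<in> SL2. trace A = \<beta>}" for \<beta>
  proof (rule bij_betw_same_card, rule bij_betw_subset[OF assms(4)])
    show "g ` {k \<in> {..<N}. trace (g k) = \<beta>} = {A \<in> SL2. trace A = \<beta>}"
      using assms(4) by (auto simp: bij_betw_def)
  qed auto
  note binomials = prod_choose_SL2_trace_classes[OF assms(2,1) this]
  show ?thesis
    unfolding card_code_SL2_weight card_zero_sum_subsets[OF finite_lessThan]
    by (rule sum.cong[OF refl binomials])
qed

end
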